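(* Fix integers $z_1>z_2\ge0$ and $k\ge1$, and let $\mathcal{Q}_{z_1,z_2,k}$ be the set of $(z_1,z_2,k)$-asymmetric partitions. Then, as formal power series in $q$, \[\sum_{\lambda\in\mathcal{Q}_{z_1,z_2,k}}q^{|\lambda|}=\sum_{n\ge k}\frac{q^{z_2+z_1(n-1)+n+n(n-2)+k}}{(1-q^2)(1-q^4)\cdots(1-q^{2k-2})\,(1-q^{2k-1})(1-q^{2k+1})\cdots(1-q^{2n-1})}.\]
   Context: $|\lambda|$ is the size of $\lambda$. The Frobenius rank of $\mu$ is $r=\max\{j:\mu_j\ge j\}$, Frobenius coordinates $(\alpha\mid\beta)$, $\alpha_i=\mu_i-i$, $\beta_i=\mu'_i-i$. For $1\le k\le r$, $\mu$ is $(z_1,z_2,k)$-asymmetric if $\mu=(\alpha_1,\dots,\alpha_r\mid\alpha_1+z_1,\dots,\widehat{\alpha_k+z_1},\dots,\alpha_r+z_1,z_2)$ for some strict partition $\alpha$, the hat denoting omission. In the denominator, the factors are $(1-q^{2j})$ for $1\le j\le k-1$ and $(1-q^{2j-1})$ for $k\le j\le n$. *)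

theory Defs
  imports Complex_Main "HOL-Computational_Algebra.Formal_Power_Series"
begin

text \<open>A partition is a weakly decreasing list of positive natural numbers
  (its nonzero parts).  Parts are 1-indexed: part mu i = mu_i, and mu_i = 0
  for i beyond the length.\<close>

definition is_partition :: "nat list \<Rightarrow> bool" where
  "is_partition mu \<longleftrightarrow> sorted_wrt (\<ge>) mu \<and> 0 \<notin> set mu"

definition part :: "nat list \<Rightarrow> nat \<Rightarrow> nat" where
  "part mu i = (if 1 \<le> i \<and> i \<le> length mu then mu ! (i - 1) else 0)"

definition psize :: "nat list \<Rightarrow> nat" where
  "psize mu = sum_list mu"

definition conj_part :: "nat list \<Rightarrow> nat \<Rightarrow> nat" where
  "conj_part mu i = card {j. 1 \<le> j \<and> j \<le> length mu \<and> part mu j \<ge> i}"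

definition frob_rank :: "nat list \<Rightarrow> nat" where
  "frob_rank mu = Max (insert 0 {j. 1 \<le> j \<and> j \<le> length mu \<and> part mu j \<ge> j})"

definition frob_alpha :: "nat list \<Rightarrow> nat list" where
  "frob_alpha mu = map (\<lambda>i. part mu i - i) [1..<frob_rank mu + 1]"

definition frob_beta :: "nat list \<Rightarrow> nat list" where
  "frob_beta mu = map (\<lambda>i. conj_part mu i - i) [1..<frob_rank mu + 1]"

text \<open>mu is (z1,z2,k)-asymmetric: 1 \<le> k \<le> r and
  mu = (alpha_1,...,alpha_r | alpha_1+z1, ..., omit alpha_k+z1, ..., alpha_r+z1, z2).\<close>
definition asymmetric :: "nat \<Rightarrow> nat \<Rightarrow> nat \<Rightarrow> nat list \<Rightarrow> bool" where
  "asymmetric z1 z2 k mu \<longleftrightarrow>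
     is_partition mu \<and> 1 \<le> k \<and> k \<le> frob_rank mu \<and>
     sorted_wrt (>) (frob_alpha mu) \<and>
     frob_beta mu =
       map (\<lambda>a. a + z1) (take (k - 1) (frob_alpha mu) @ drop k (frob_alpha mu)) @ [z2]"

definition asym_set :: "nat \<Rightarrow> nat \<Rightarrow> nat \<Rightarrow> nat list set" where
  "asym_set z1 z2 k = {mu. asymmetric z1 z2 k mu}"

definition asym_gf :: "nat \<Rightarrow> nat \<Rightarrow> nat \<Rightarrow> rat fps" where
  "asym_gf z1 z2 k = Abs_fps (\<lambda>m. of_nat (card {mu \<in> asym_set z1 z2 k. psize mu = m}))"

definition rhs_term :: "nat \<Rightarrow> nat \<Rightarrow> nat \<Rightarrow> nat \<Rightarrow> rat fps" where
  "rhs_term z1 z2 k n =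
     fps_X ^ nat (int z2 + int z1 * (int n - 1) + int n + int n * (int n - 2) + int k) /
     ((\<Prod>j\<in>{1..<k}. 1 - fps_X ^ (2 * j)) * (\<Prod>j\<in>{k..n}. 1 - fps_X ^ (2 * j - 1)))"

end

theory Submission
  imports Defs
begin

text \<open>A partition is determined by its Frobenius coordinates \<open>(\<alpha> | \<beta>)\<close>, any two strictly
  decreasing sequences of the same length \<open>n\<close> occur, and \<open>|\<mu>| = n + \<Sigma>\<alpha> + \<Sigma>\<beta>\<close>.  For a
  \<open>(z\<^sub>1, z\<^sub>2, k)\<close>-asymmetric partition of rank \<open>n\<close>, \<open>\<beta>\<close> is determined by \<open>\<alpha>\<close>, so these
  partitions correspond to strictly decreasing \<open>\<alpha>\<close> of length \<open>n\<close>, with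
  \<open>|\<mu>| = n + 2\<Sigma>\<alpha> - \<alpha>\<^sub>k + (n - 1) z\<^sub>1 + z\<^sub>2\<close>.  Writing
  \<open>\<alpha>\<^sub>i = (n - i) + d\<^sub>i + \<dots> + d\<^sub>n\<close> with \<open>d \<in> \<nat>\<^sup>n\<close> arbitrary makes this
  \<open>z\<^sub>2 + z\<^sub>1 (n - 1) + n (n - 1) + k + \<Sigma>\<^sub>j w\<^sub>j d\<^sub>j\<close> with \<open>w\<^sub>j = 2j\<close> for \<open>j < k\<close> and
  \<open>w\<^sub>j = 2j - 1\<close> otherwise, so the rank-\<open>n\<close> partitions contribute exactly the \<open>n\<close>-th summand.
  Summing over \<open>n \<ge> k\<close> converges coefficientwise because the rank never exceeds the size.\<close>

section \<open>Counting solutions of linear equations\<close>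

definition weighted_sum :: "nat list \<Rightarrow> nat list \<Rightarrow> nat" where
  "weighted_sum w d = sum_list (map2 (*) w d)"

definition weighted_solutions :: "nat list \<Rightarrow> nat \<Rightarrow> nat list set" where
  "weighted_solutions w m = {d. length d = length w \<and> weighted_sum w d = m}"

lemma weighted_sum_Nil [simp]: "weighted_sum [] d = 0"
  by (simp add: weighted_sum_def)

lemma weighted_sum_Cons [simp]: "weighted_sum (x # w) (y # d) = x * y + weighted_sum w d"
  by (simp add: weighted_sum_def)

lemma weighted_sum_ge_entry:
  assumes "0 \<notin> set w" "length d = length w" "y \<in> set d"
  shows "y \<le> weighted_sum w d"
  using assms
proof (induction w arbitrary: d)
  case Nil
  then show ?case by simp
next
  case (Cons x w)
  then obtain y0 d0 where d: "d = y0 # d0" by (cases d) auto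
  show ?case
  proof (cases "y = y0")
    case True
    have "y0 \<le> x * y0" using Cons.prems by simp
    then show ?thesis using True d by (simp add: trans_le_add1)
  next
    case False
    then have "y \<le> weighted_sum w d0" using Cons d by simp
    then show ?thesis using d by simp
  qed
qed

lemma finite_weighted_solutions:
  assumes "0 \<notin> set w"
  shows "finite (weighted_solutions w m)"
proof (rule finite_subset)
  show "weighted_solutions w m \<subseteq> {d. set d \<subseteq> {..m} \<and> length d = length w}"
    using weighted_sum_ge_entry[OF assms] by (fastforce simp: weighted_solutions_def)
  show "finite {d. set d \<subseteq> {..m} \<and> length d = length w}"
    by (rule finite_lists_length_eq) simp
qed

lemma card_weighted_solutions_Nil: "card (weighted_solutions [] m) = (if m = 0 then 1 else 0)"
proof -
  have "weighted_solutions [] m = (if m = 0 then {[]} else {})"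
    by (auto simp: weighted_solutions_def)
  then show ?thesis by simp
qed

text \<open>Split off the solutions with first coordinate zero and decrement the first
  coordinate of the others: this is the recurrence behind multiplying by \<open>1 - q ^ x\<close>.\<close>

lemma weighted_solutions_Cons:
  "weighted_solutions (x # w) m =
     (\<lambda>d. 0 # d) ` weighted_solutions w m \<union>
     (if x \<le> m then (\<lambda>d. Suc (hd d) # tl d) ` weighted_solutions (x # w) (m - x) else {})"
  (is "?S = ?Z \<union> ?I")
proof (intro equalityI subsetI)
  fix d assume "d \<in> ?S"
  then obtain y d0 where d: "d = y # d0" "length d0 = length w" "x * y + weighted_sum w d0 = m"
    by (cases d) (auto simp: weighted_solutions_def)
  show "d \<in> ?Z \<union> ?I"
  proof (cases y)
    case 0
    then show ?thesis using d by (auto simp: weighted_solutions_def)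
  next
    case (Suc y')
    have "x \<le> m" using d Suc by simp
    moreover have "y' # d0 \<in> weighted_solutions (x # w) (m - x)"
      using d Suc by (auto simp: weighted_solutions_def)
    ultimately show ?thesis using d Suc by (auto intro!: image_eqI[where x="y' # d0"])
  qed
next
  fix d assume "d \<in> ?Z \<union> ?I"
  then show "d \<in> ?S"
  proof
    assume "d \<in> ?Z"
    then show ?thesis by (auto simp: weighted_solutions_def)
  next
    assume d: "d \<in> ?I"
    then have xm: "x \<le> m" by (auto split: if_splits)
    with d obtain e where e: "e \<in> weighted_solutions (x # w) (m - x)" "d = Suc (hd e) # tl e"
      by auto
    then obtain y e0 where "e = y # e0" by (cases e) (auto simp: weighted_solutions_def)
    then show ?thesis using e xm by (auto simp: weighted_solutions_def)
  qed
qed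

lemma card_weighted_solutions_Cons:
  assumes "0 \<notin> set (x # w)"
  shows "card (weighted_solutions (x # w) m) =
    card (weighted_solutions w m) + (if x \<le> m then card (weighted_solutions (x # w) (m - x)) else 0)"
proof -
  let ?S = weighted_solutions
  let ?zero = "\<lambda>d. 0 # d" and ?incr = "\<lambda>d. Suc (hd d) # tl d"
  have fin: "finite (?S w m)" "finite (?S (x # w) (m - x))"
    using assms finite_weighted_solutions by auto
  have inj_zero: "inj_on ?zero (?S w m)" by (auto intro: inj_onI)
  have inj_incr: "inj_on ?incr (?S (x # w) (m - x))"
  proof (rule inj_onI)
    fix d e assume "d \<in> ?S (x # w) (m - x)" "e \<in> ?S (x # w) (m - x)" "?incr d = ?incr e"
    then show "d = e" by (cases d; cases e) (auto simp: weighted_solutions_def)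
  qed
  have "?zero ` ?S w m \<inter> ?incr ` ?S (x # w) (m - x) = {}"
    by auto
  then show ?thesis
    using weighted_solutions_Cons[of x w m] fin card_image[OF inj_zero] card_image[OF inj_incr]
    by (simp add: card_Un_disjoint)
qed

lemma weighted_solutions_gf:
  assumes "0 \<notin> set w"
  shows "Abs_fps (\<lambda>m. of_nat (card (weighted_solutions w m)) :: 'a :: comm_ring_1) *
           prod_list (map (\<lambda>x. 1 - fps_X ^ x) w) = 1"
  using assms
proof (induction w)
  case Nil
  show ?case by (intro fps_ext) (simp add: card_weighted_solutions_Nil)
next
  case (Cons x w)
  have "Abs_fps (\<lambda>m. of_nat (card (weighted_solutions (x # w) m)) :: 'a) * (1 - fps_X ^ x) =
        Abs_fps (\<lambda>m. of_nat (card (weighted_solutions w m)))"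
    by (intro fps_ext) (simp add: card_weighted_solutions_Cons[OF Cons.prems] algebra_simps fps_X_power_mult_nth)
  then show ?case using Cons by (simp add: mult.assoc[symmetric])
qed

lemma gf_affine_parametrisation:
  fixes g :: "'b \<Rightarrow> nat"
  assumes w: "0 \<notin> set w"
    and bij: "bij_betw F {d. length d = length w} S"
    and g: "\<And>d. length d = length w \<Longrightarrow> g (F d) = e + weighted_sum w d"
  shows "Abs_fps (\<lambda>m. of_nat (card {x \<in> S. g x = m})) =
           (fps_X ^ e / prod_list (map (\<lambda>x. 1 - fps_X ^ x) w) :: 'a :: field fps)"
proof -
  let ?Q = "prod_list (map (\<lambda>x. 1 - fps_X ^ x) w) :: 'a fps"
  let ?G = "Abs_fps (\<lambda>m. of_nat (card (weighted_solutions w m)) :: 'a)"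
  have QG: "?Q * ?G = 1"
    using weighted_solutions_gf[OF w] by (simp add: mult.commute)
  then have "fps_nth ?Q 0 \<noteq> 0"
    by (metis fps_mult_nth_0 fps_one_nth mult_zero_left zero_neq_one)
  then have "fps_X ^ e / ?Q = fps_X ^ e * ?G"
    by (simp add: fps_divide_unit fps_inverse_unique[OF QG])
  moreover have "card {x \<in> S. g x = m} = (if e \<le> m then card (weighted_solutions w (m - e)) else 0)" for m
  proof -
    have "{x \<in> S. g x = m} = F ` {d. length d = length w \<and> e + weighted_sum w d = m}"
      using bij g by (auto simp: bij_betw_def)
    moreover have "inj_on F {d. length d = length w \<and> e + weighted_sum w d = m}"
      using bij by (auto simp: bij_betw_def intro: inj_on_subset)
    moreover have "{d. length d = length w \<and> e + weighted_sum w d = m} =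
        (if e \<le> m then weighted_solutions w (m - e) else {})"
      by (auto simp: weighted_solutions_def)
    ultimately show ?thesis by (simp add: card_image)
  qed
  ultimately show ?thesis
    by (intro fps_ext) (simp add: fps_X_power_mult_nth not_less)
qed

lemma sums_fps_finite_support_coeffs:
  fixes f :: "nat \<Rightarrow> 'a :: comm_ring_1 fps"
  assumes "\<And>i m. m < i \<Longrightarrow> fps_nth (f i) m = 0"
  shows "f sums Abs_fps (\<lambda>m. \<Sum>i\<le>m. fps_nth (f i) m)"
  unfolding sums_def
proof (rule tendsto_fpsI)
  fix m
  have "fps_nth (\<Sum>i<N. f i) m = (\<Sum>i\<le>m. fps_nth (f i) m)" if "m < N" for N
    using that assms by (simp add: fps_sum_nth) (rule sum.mono_neutral_right; auto)
  then show "\<forall>\<^sub>F N in sequentially.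
      fps_nth (\<Sum>i<N. f i) m = fps_nth (Abs_fps (\<lambda>m. \<Sum>i\<le>m. fps_nth (f i) m)) m"
    by (auto simp: eventually_sequentially intro!: exI[of _ "Suc m"])
qed

section \<open>Strictly decreasing lists and their gaps\<close>

text \<open>A strictly decreasing list \<open>\<alpha>\<close> of length \<open>n\<close> is encoded by its gaps
  \<open>d\<^sub>i = \<alpha>\<^sub>i - \<alpha>\<^sub>i\<^sub>+\<^sub>1 - 1\<close> (and \<open>d\<^sub>n = \<alpha>\<^sub>n\<close>), which range freely over \<open>\<nat>\<^sup>n\<close>.\<close>

definition strict_of_gaps :: "nat list \<Rightarrow> nat list" where
  "strict_of_gaps d = map (\<lambda>i. sum_list (drop i d) + (length d - 1 - i)) [0..<length d]"

definition gaps_of_strict :: "nat list \<Rightarrow> nat list" where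
  "gaps_of_strict xs =
     map (\<lambda>i. xs ! i - (if Suc i < length xs then Suc (xs ! Suc i) else 0)) [0..<length xs]"

lemma length_strict_of_gaps [simp]: "length (strict_of_gaps d) = length d"
  by (simp add: strict_of_gaps_def)

lemma length_gaps_of_strict [simp]: "length (gaps_of_strict xs) = length xs"
  by (simp add: gaps_of_strict_def)

lemma nth_strict_of_gaps:
  "i < length d \<Longrightarrow> strict_of_gaps d ! i = sum_list (drop i d) + (length d - 1 - i)"
  by (simp add: strict_of_gaps_def)

lemma sorted_wrt_less_nth_gap:
  assumes "sorted_wrt (>) xs" "i \<le> j" "j < length xs"
  shows "xs ! j + (j - i) \<le> xs ! i"
  using assms(2,3)
proof (induction j rule: dec_induct)
  case base
  then show ?case by simp
next
  case (step j)
  have "xs ! Suc j < xs ! j" using assms(1) step by (simp add: sorted_wrt_iff_nth_less)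
  with step show ?case by linarith
qed

lemma sorted_wrt_less_nth_lower:
  assumes "sorted_wrt (>) xs" "i < length xs"
  shows "length xs - 1 - i \<le> xs ! i"
proof -
  have "xs ! (length xs - 1) + (length xs - 1 - i) \<le> xs ! i"
    using sorted_wrt_less_nth_gap[OF assms(1), of i "length xs - 1"] assms(2) by simp
  then show ?thesis by linarith
qed

lemma sorted_wrt_less_nth_add_antimono:
  assumes "sorted_wrt (>) xs" "1 \<le> i" "i \<le> i'" "i' \<le> length xs"
  shows "xs ! (i' - 1) + i' \<le> xs ! (i - 1) + i"
proof -
  have "xs ! (i' - 1) + ((i' - 1) - (i - 1)) \<le> xs ! (i - 1)"
    by (rule sorted_wrt_less_nth_gap) (use assms in auto)
  then show ?thesis using assms by arith
qed

lemma sorted_wrt_less_nth_add_lower: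
  assumes "sorted_wrt (>) xs" "1 \<le> i" "i \<le> length xs"
  shows "length xs \<le> xs ! (i - 1) + i"
proof -
  have "length xs - 1 - (i - 1) \<le> xs ! (i - 1)"
    by (rule sorted_wrt_less_nth_lower) (use assms in auto)
  then show ?thesis using assms by arith
qed

lemma sum_list_drop_Suc:
  "i < length xs \<Longrightarrow> sum_list (drop i xs) = xs ! i + sum_list (drop (Suc i) (xs :: nat list))"
  by (simp add: Cons_nth_drop_Suc[symmetric])

lemma sum_list_drop_antimono:
  assumes "i \<le> j"
  shows "sum_list (drop j xs) \<le> sum_list (drop i (xs :: nat list))"
proof -
  have "sum_list (drop i xs) = sum_list (take (j - i) (drop i xs)) + sum_list (drop j xs)"
    using assms by (metis append_take_drop_id drop_drop le_add_diff_inverse2 sum_list_append)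
  then show ?thesis by simp
qed

lemma sorted_strict_of_gaps: "sorted_wrt (>) (strict_of_gaps d)"
proof -
  have "strict_of_gaps d ! j < strict_of_gaps d ! i" if "i < j" "j < length d" for i j
    using that sum_list_drop_antimono[of i j d] by (simp add: nth_strict_of_gaps)
  then show ?thesis by (simp add: sorted_wrt_iff_nth_less)
qed

lemma gaps_of_strict_of_gaps: "gaps_of_strict (strict_of_gaps d) = d"
proof (rule nth_equalityI)
  fix i assume "i < length (gaps_of_strict (strict_of_gaps d))"
  then have i: "i < length d" by simp
  then show "gaps_of_strict (strict_of_gaps d) ! i = d ! i"
    using sum_list_drop_Suc[OF i]
    by (cases "Suc i < length d") (simp_all add: gaps_of_strict_def nth_strict_of_gaps)
qed simp

lemma strict_of_gaps_of_strict:
  assumes "sorted_wrt (>) xs"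
  shows "strict_of_gaps (gaps_of_strict xs) = xs"
proof (rule nth_equalityI)
  have tail: "sum_list (drop i (gaps_of_strict xs)) + (length xs - 1 - i) = xs ! i"
    if "i < length xs" for i
    using that
  proof (induction "length xs - i" arbitrary: i)
    case 0
    then show ?case by simp
  next
    case (Suc t)
    have split: "sum_list (drop i (gaps_of_strict xs)) =
        gaps_of_strict xs ! i + sum_list (drop (Suc i) (gaps_of_strict xs))"
      using sum_list_drop_Suc[of i "gaps_of_strict xs"] Suc.prems by simp
    show ?case
    proof (cases "Suc i < length xs")
      case True
      have "xs ! Suc i < xs ! i" using assms True by (simp add: sorted_wrt_iff_nth_less)
      moreover have "gaps_of_strict xs ! i = xs ! i - Suc (xs ! Suc i)"
        using True by (simp add: gaps_of_strict_def)
      moreover have "sum_list (drop (Suc i) (gaps_of_strict xs)) + (length xs - 1 - Suc i) = xs ! Suc i"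
        using Suc True by simp
      ultimately show ?thesis using True split by linarith
    next
      case False
      then show ?thesis using Suc.prems split by (simp add: gaps_of_strict_def)
    qed
  qed
  fix i assume "i < length (strict_of_gaps (gaps_of_strict xs))"
  then show "strict_of_gaps (gaps_of_strict xs) ! i = xs ! i"
    using tail by (simp add: nth_strict_of_gaps)
qed simp

lemma bij_strict_of_gaps:
  "bij_betw strict_of_gaps {d. length d = n} {xs. length xs = n \<and> sorted_wrt (>) xs}"
  by (rule bij_betw_byWitness[where f'=gaps_of_strict])
    (auto simp: gaps_of_strict_of_gaps strict_of_gaps_of_strict sorted_strict_of_gaps)

definition asym_weights :: "nat \<Rightarrow> nat \<Rightarrow> nat list" where
  "asym_weights k n = map (\<lambda>j. if j < k then 2 * j else 2 * j - 1) [1..<n + 1]"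

lemma length_asym_weights [simp]: "length (asym_weights k n) = n"
  by (simp add: asym_weights_def)

lemma zero_notin_asym_weights: "0 \<notin> set (asym_weights k n)"
  by (auto simp: asym_weights_def)

lemma nth_asym_weights:
  "i < n \<Longrightarrow> asym_weights k n ! i = (if Suc i < k then 2 * Suc i else 2 * Suc i - 1)"
  unfolding asym_weights_def by (subst nth_map) (simp_all add: nth_upt del: upt_Suc)

lemma sum_list_drop_eq_sum: "sum_list (drop i d) = (\<Sum>j\<in>{i..<length d}. d ! j)"
proof (induction d arbitrary: i)
  case Nil
  then show ?case by simp
next
  case (Cons x d)
  show ?case
  proof (cases i)
    case 0
    then show ?thesis by (simp add: sum_list_sum_nth atLeast0LessThan)
  next
    case (Suc i')
    have "(\<Sum>j\<in>{Suc i'..<Suc (length d)}. (x # d) ! j) = (\<Sum>j\<in>{i'..<length d}. d ! j)"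
      by (subst sum.shift_bounds_Suc_ivl) simp
    then show ?thesis using Cons Suc by simp
  qed
qed

lemma sum_lessThan_atLeastLessThan_swap:
  "(\<Sum>i<n. \<Sum>j\<in>{i..<n}. f j) = (\<Sum>j<n. Suc j * (f j :: nat))"
  by (induction n) (simp_all add: sum.distrib)

lemma double_sum_lessThan_diff: "2 * (\<Sum>i<n. n - 1 - i) = n * (n - 1 :: nat)"
proof -
  have "(\<Sum>i<n. n - 1 - i) = (\<Sum>i<n. i)"
    using sum.nat_diff_reindex[of "\<lambda>i. i" n] by simp
  moreover have "2 * (\<Sum>i<n. i) = n * (n - 1 :: nat)"
    by (induction n) (auto simp: algebra_simps)
  ultimately show ?thesis by simp
qed

text \<open>With \<open>\<alpha>\<close> given by its gaps \<open>d\<close>, the quantity \<open>2 \<Sigma>\<alpha> - \<alpha>\<^sub>k\<close> is linear in \<open>d\<close>.\<close>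

lemma weighted_sum_asym_weights:
  assumes d: "length d = n" and k: "1 \<le> k" "k \<le> n"
  shows "weighted_sum (asym_weights k n) d + strict_of_gaps d ! (k - 1) + n * (n - 1) + k =
           2 * sum_list (strict_of_gaps d) + n"
proof -
  define S where "S i = sum_list (drop i d)" for i
  have S: "S i = (\<Sum>j\<in>{i..<n}. d ! j)" for i
    using d by (simp add: S_def sum_list_drop_eq_sum)
  have "sum_list (strict_of_gaps d) = (\<Sum>i<n. S i + (n - 1 - i))"
    using d by (simp add: sum_list_sum_nth lessThan_atLeast0 nth_strict_of_gaps S_def)
  then have sum_alpha: "sum_list (strict_of_gaps d) = (\<Sum>i<n. S i) + (\<Sum>i<n. n - 1 - i)"
    by (simp only: sum.distrib)
  have alpha_k: "strict_of_gaps d ! (k - 1) = S (k - 1) + (n - k)"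
    using d k by (simp add: nth_strict_of_gaps S_def)
  have "weighted_sum (asym_weights k n) d =
      (\<Sum>j<n. (if Suc j < k then 2 * Suc j else 2 * Suc j - 1) * d ! j)"
    using d by (simp add: weighted_sum_def sum_list_sum_nth lessThan_atLeast0 nth_asym_weights)
  then have "weighted_sum (asym_weights k n) d + S (k - 1) =
      (\<Sum>j<n. (if Suc j < k then 2 * Suc j else 2 * Suc j - 1) * d ! j + (if k - 1 \<le> j then d ! j else 0))"
    unfolding S by (simp add: sum.distrib sum.If_cases lessThan_atLeast0 Int_def) (rule sum.cong; auto)
  also have "\<dots> = (\<Sum>j<n. 2 * (Suc j * d ! j))"
    by (rule sum.cong) (auto simp: algebra_simps)
  also have "\<dots> = 2 * (\<Sum>i<n. S i)"
    using sum_lessThan_atLeastLessThan_swap[where n=n and f="\<lambda>j. d ! j"] by (simp add: S sum_distrib_left)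
  finally show ?thesis
    using sum_alpha alpha_k double_sum_lessThan_diff[of n] k by simp
qed

section \<open>Partitions and Frobenius coordinates\<close>

lemma down_closed_eq_atLeastAtMost_card:
  assumes "finite T" and "\<And>x y. x \<in> T \<Longrightarrow> 1 \<le> x \<and> (1 \<le> y \<longrightarrow> y \<le> x \<longrightarrow> y \<in> T)"
  shows "T = {1..card T}"
proof (cases "T = {}")
  case False
  define M where "M = Max T"
  have "T = {1..M}"
  proof
    show "T \<subseteq> {1..M}"
      using assms(2) Max_ge[OF assms(1)] unfolding M_def by (meson atLeastAtMost_iff subsetI)
    show "{1..M} \<subseteq> T"
      using assms(2)[OF Max_in[OF assms(1) False]] unfolding M_def by auto
  qed
  then show ?thesis by simp
qed simp

lemma nat_eq_if_same_pos_lower_bounds: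
  assumes "\<And>j. 1 \<le> j \<Longrightarrow> j \<le> x \<longleftrightarrow> j \<le> (y :: nat)"
  shows "x = y"
  using assms[of x] assms[of y] by (cases "x = 0"; cases "y = 0") auto

lemma part_pos_iff:
  assumes "is_partition mu"
  shows "0 < part mu i \<longleftrightarrow> 1 \<le> i \<and> i \<le> length mu"
proof (cases "1 \<le> i \<and> i \<le> length mu")
  case True
  then have "mu ! (i - 1) \<in> set mu" by (intro nth_mem) linarith
  then have "mu ! (i - 1) \<noteq> 0" using assms by (metis is_partition_def)
  then show ?thesis using True by (simp add: part_def)
qed (auto simp: part_def)

lemma nth_eq_part: "i < length mu \<Longrightarrow> mu ! i = part mu (Suc i)"
  by (simp add: part_def)

lemma part_antimono:
  assumes "is_partition mu" "1 \<le> i" "i \<le> i'"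
  shows "part mu i' \<le> part mu i"
proof (cases "i' \<le> length mu")
  case True
  have "sorted_wrt (\<ge>) mu" using assms(1) by (simp add: is_partition_def)
  then have "mu ! (i' - 1) \<le> mu ! (i - 1)"
    using True assms(2,3) by (cases "i = i'") (auto simp: sorted_wrt_iff_nth_less)
  then show ?thesis using True assms by (simp add: part_def)
qed (simp add: part_def)

lemma le_part_iff_le_conj_part:
  assumes mu: "is_partition mu" and "1 \<le> i" "1 \<le> j"
  shows "j \<le> part mu i \<longleftrightarrow> i \<le> conj_part mu j"
proof -
  define T where "T = {i'. 1 \<le> i' \<and> i' \<le> length mu \<and> j \<le> part mu i'}"
  have fin: "finite T" unfolding T_def by (rule finite_subset[of _ "{..length mu}"]) auto
  have "T = {1..card T}"
  proof (rule down_closed_eq_atLeastAtMost_card[OF fin])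
    fix x y assume "x \<in> T"
    then show "1 \<le> x \<and> (1 \<le> y \<longrightarrow> y \<le> x \<longrightarrow> y \<in> T)"
      unfolding T_def using part_antimono[OF mu] by (auto intro: order_trans)
  qed
  moreover have "conj_part mu j = card T" by (simp add: conj_part_def T_def)
  moreover have "i \<in> T \<longleftrightarrow> j \<le> part mu i"
    using part_pos_iff[OF mu, of i] assms unfolding T_def by auto
  ultimately show ?thesis using assms by (metis atLeastAtMost_iff)
qed

lemma le_frob_rank_iff:
  assumes mu: "is_partition mu" and "1 \<le> i"
  shows "i \<le> frob_rank mu \<longleftrightarrow> i \<le> part mu i"
proof -
  define R where "R = {j. 1 \<le> j \<and> j \<le> length mu \<and> part mu j \<ge> j}"
  have fin: "finite R" unfolding R_def by (rule finite_subset[of _ "{..length mu}"]) auto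
  have R: "R = {1..card R}"
  proof (rule down_closed_eq_atLeastAtMost_card[OF fin])
    fix x y assume "x \<in> R"
    then show "1 \<le> x \<and> (1 \<le> y \<longrightarrow> y \<le> x \<longrightarrow> y \<in> R)"
      unfolding R_def using part_antimono[OF mu] by (auto intro: order_trans)
  qed
  have "frob_rank mu = Max (insert 0 R)" by (simp add: frob_rank_def R_def)
  also have "\<dots> = card R"
  proof (rule Max_eqI)
    show "finite (insert 0 R)" using fin by simp
    show "y \<le> card R" if "y \<in> insert 0 R" for y using that by (subst (asm) R) auto
    show "card R \<in> insert 0 R" by (subst (2) R) auto
  qed
  finally have "frob_rank mu = card R" .
  moreover have "i \<in> R \<longleftrightarrow> i \<le> part mu i"
    using part_pos_iff[OF mu, of i] assms unfolding R_def by auto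
  ultimately show ?thesis using R assms by (metis atLeastAtMost_iff)
qed

lemma frob_rank_le_psize:
  assumes mu: "is_partition mu"
  shows "frob_rank mu \<le> psize mu"
proof (cases "frob_rank mu = 0")
  case False
  let ?r = "frob_rank mu"
  have r_le: "?r \<le> part mu ?r" using le_frob_rank_iff[OF mu, of ?r] False by simp
  have r: "1 \<le> ?r" "?r - 1 < length mu"
    using part_pos_iff[OF mu, of ?r] r_le False by simp_all
  have "part mu ?r = mu ! (?r - 1)" using r by (simp add: part_def)
  also have "\<dots> \<le> psize mu" using nth_mem[OF r(2)] by (simp add: psize_def member_le_sum_list)
  finally show ?thesis using r_le by linarith
qed simp

lemma finite_partitions_of_size: "finite {mu. is_partition mu \<and> psize mu = m}"
proof (rule finite_subset)
  have "length mu \<le> sum_list mu" if "0 \<notin> set mu" for mu :: "nat list"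
    using that by (induction mu) (auto simp: Suc_le_eq)
  then show "{mu. is_partition mu \<and> psize mu = m} \<subseteq> {mu. set mu \<subseteq> {..m} \<and> length mu \<le> m}"
    by (auto simp: is_partition_def psize_def member_le_sum_list)
  show "finite {mu. set mu \<subseteq> {..m} \<and> length mu \<le> m}"
    by (rule finite_lists_length_le) simp
qed

lemma length_frob_alpha [simp]: "length (frob_alpha mu) = frob_rank mu"
  by (simp add: frob_alpha_def)

lemma length_frob_beta [simp]: "length (frob_beta mu) = frob_rank mu"
  by (simp add: frob_beta_def)

lemma nth_frob_alpha:
  "1 \<le> i \<Longrightarrow> i \<le> frob_rank mu \<Longrightarrow> frob_alpha mu ! (i - 1) = part mu i - i"
  unfolding frob_alpha_def by (subst nth_map) (simp_all del: upt_Suc)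

lemma nth_frob_beta:
  "1 \<le> i \<Longrightarrow> i \<le> frob_rank mu \<Longrightarrow> frob_beta mu ! (i - 1) = conj_part mu i - i"
  unfolding frob_beta_def by (subst nth_map) (simp_all del: upt_Suc)

text \<open>Cell \<open>(i, j)\<close> (row \<open>i\<close>, column \<open>j\<close>, both from 1) of the diagram with Frobenius
  coordinates \<open>(a | b)\<close> of rank \<open>n\<close>: on or right of the diagonal it is governed by the arm
  lengths \<open>a\<close>, strictly below it by the leg lengths \<open>b\<close>.\<close>

definition frob_cell :: "nat \<Rightarrow> nat list \<Rightarrow> nat list \<Rightarrow> nat \<Rightarrow> nat \<Rightarrow> bool" where
  "frob_cell n a b i j \<longleftrightarrow>
     (i \<le> j \<and> i \<le> n \<and> j \<le> a ! (i - 1) + i) \<or> (j < i \<and> j \<le> n \<and> i \<le> b ! (j - 1) + j)"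

lemma le_part_iff_frob_cell:
  assumes mu: "is_partition mu" and i: "1 \<le> i" and j: "1 \<le> j"
  shows "j \<le> part mu i \<longleftrightarrow> frob_cell (frob_rank mu) (frob_alpha mu) (frob_beta mu) i j"
proof (cases "i \<le> j")
  case True
  have "j \<le> part mu i \<longleftrightarrow> i \<le> frob_rank mu \<and> j \<le> frob_alpha mu ! (i - 1) + i"
  proof
    assume j_le: "j \<le> part mu i"
    then have "i \<le> frob_rank mu" using le_frob_rank_iff[OF mu i] True by simp
    then show "i \<le> frob_rank mu \<and> j \<le> frob_alpha mu ! (i - 1) + i"
      using j_le i nth_frob_alpha[OF i, of mu] by simp
  next
    assume "i \<le> frob_rank mu \<and> j \<le> frob_alpha mu ! (i - 1) + i"
    moreover from this have "i \<le> part mu i" using le_frob_rank_iff[OF mu i] by simp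
    ultimately show "j \<le> part mu i" using i nth_frob_alpha[OF i, of mu] by simp
  qed
  then show ?thesis using True by (simp add: frob_cell_def)
next
  case False
  have "j \<le> part mu i \<longleftrightarrow> i \<le> conj_part mu j"
    using le_part_iff_le_conj_part[OF mu i j] .
  also have "\<dots> \<longleftrightarrow> j \<le> frob_rank mu \<and> i \<le> frob_beta mu ! (j - 1) + j"
  proof
    assume i_le: "i \<le> conj_part mu j"
    then have "j \<le> part mu j" using le_part_iff_le_conj_part[OF mu j j] False by simp
    then have "j \<le> frob_rank mu" using le_frob_rank_iff[OF mu j] by simp
    then show "j \<le> frob_rank mu \<and> i \<le> frob_beta mu ! (j - 1) + j"
      using i_le j nth_frob_beta[OF j, of mu] by simp
  next
    assume "j \<le> frob_rank mu \<and> i \<le> frob_beta mu ! (j - 1) + j"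
    moreover from this have "j \<le> conj_part mu j"
      using le_frob_rank_iff[OF mu j] le_part_iff_le_conj_part[OF mu j j] by simp
    ultimately show "i \<le> conj_part mu j" using j nth_frob_beta[OF j, of mu] by simp
  qed
  finally show ?thesis using False by (simp add: frob_cell_def)
qed

lemma partition_eqI:
  assumes mu: "is_partition mu" and nu: "is_partition nu"
    and cells: "\<And>i j. 1 \<le> i \<Longrightarrow> 1 \<le> j \<Longrightarrow> j \<le> part mu i \<longleftrightarrow> j \<le> part nu i"
  shows "mu = nu"
proof -
  have parts: "part mu i = part nu i" if "1 \<le> i" for i
    by (rule nat_eq_if_same_pos_lower_bounds) (use cells that in auto)
  have length: "length mu = length nu"
  proof (rule ccontr)
    assume "length mu \<noteq> length nu"
    then consider "length mu < length nu" | "length nu < length mu" by linarith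
    then show False
    proof cases
      case 1
      then show False
        using parts[of "length nu"] part_pos_iff[OF nu, of "length nu"] part_pos_iff[OF mu, of "length nu"]
        by simp
    next
      case 2
      then show False
        using parts[of "length mu"] part_pos_iff[OF nu, of "length mu"] part_pos_iff[OF mu, of "length mu"]
        by simp
    qed
  qed
  then show ?thesis
    by (rule nth_equalityI) (use length parts in \<open>auto simp: nth_eq_part\<close>)
qed

lemma card_filter_eq_sum: "finite A \<Longrightarrow> card {x \<in> A. P x} = (\<Sum>x\<in>A. if P x then 1 else 0)"
  by (simp add: sum.inter_filter[symmetric])

definition leg_count :: "nat \<Rightarrow> nat list \<Rightarrow> nat \<Rightarrow> nat" where
  "leg_count n b i = card {j \<in> {1..n}. i \<le> b ! (j - 1) + j}"

text \<open>Rows \<open>i \<le> n\<close> have length \<open>a\<^sub>i + i\<close>; a row \<open>i > n\<close> has one cell in every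
  column \<open>j \<le> n\<close> whose leg reaches row \<open>i\<close>, and the longest leg ends in row \<open>b\<^sub>1 + 1\<close>.\<close>

definition partition_of_frob :: "nat \<Rightarrow> nat list \<Rightarrow> nat list \<Rightarrow> nat list" where
  "partition_of_frob n a b =
     map (\<lambda>i. a ! (i - 1) + i) [1..<n + 1] @ map (leg_count n b) [n + 1..<b ! 0 + 2]"

locale frob_coords =
  fixes n :: nat and a b :: "nat list"
  assumes rank_pos: "1 \<le> n" and length_a: "length a = n" and length_b: "length b = n"
    and sorted_a: "sorted_wrt (>) a" and sorted_b: "sorted_wrt (>) b"
begin

lemma arm_antimono: "1 \<le> i \<Longrightarrow> i \<le> i' \<Longrightarrow> i' \<le> n \<Longrightarrow> a ! (i' - 1) + i' \<le> a ! (i - 1) + i"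
  using sorted_wrt_less_nth_add_antimono[OF sorted_a] length_a by simp

lemma leg_antimono: "1 \<le> j \<Longrightarrow> j \<le> j' \<Longrightarrow> j' \<le> n \<Longrightarrow> b ! (j' - 1) + j' \<le> b ! (j - 1) + j"
  using sorted_wrt_less_nth_add_antimono[OF sorted_b] length_b by simp

lemma arm_lower: "1 \<le> i \<Longrightarrow> i \<le> n \<Longrightarrow> n \<le> a ! (i - 1) + i"
  using sorted_wrt_less_nth_add_lower[OF sorted_a] length_a by simp

lemma leg_lower: "1 \<le> j \<Longrightarrow> j \<le> n \<Longrightarrow> n \<le> b ! (j - 1) + j"
  using sorted_wrt_less_nth_add_lower[OF sorted_b] length_b by simp

lemma length_partition_of_frob: "length (partition_of_frob n a b) = b ! 0 + 1"
  using leg_lower[of 1] rank_pos by (simp add: partition_of_frob_def del: upt_Suc)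

lemma leg_count_le: "leg_count n b i \<le> n"
proof -
  have "leg_count n b i \<le> card {1..n}" unfolding leg_count_def by (rule card_mono) auto
  then show ?thesis by simp
qed

lemma le_leg_count_iff:
  assumes j: "1 \<le> j"
  shows "j \<le> leg_count n b i \<longleftrightarrow> j \<le> n \<and> i \<le> b ! (j - 1) + j"
proof -
  define C where "C = {j \<in> {1..n}. i \<le> b ! (j - 1) + j}"
  have "C = {1..card C}"
  proof (rule down_closed_eq_atLeastAtMost_card)
    fix x y assume x: "x \<in> C"
    then show "1 \<le> x \<and> (1 \<le> y \<longrightarrow> y \<le> x \<longrightarrow> y \<in> C)"
      using leg_antimono[of y x] by (auto simp: C_def)
  qed (simp add: C_def)
  then have "j \<le> leg_count n b i \<longleftrightarrow> j \<in> C"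
    using j by (metis C_def atLeastAtMost_iff leg_count_def)
  then show ?thesis using j by (simp add: C_def)
qed

lemma part_partition_of_frob:
  assumes i: "1 \<le> i"
  shows "part (partition_of_frob n a b) i = (if i \<le> n then a ! (i - 1) + i else leg_count n b i)"
proof -
  have n: "n \<le> b ! 0 + 1" using leg_lower[of 1] rank_pos by simp
  consider "i \<le> n" | "n < i" "i \<le> b ! 0 + 1" | "b ! 0 + 1 < i" by linarith
  then show ?thesis
  proof cases
    case 1
    then have "i - 1 < n" using i by linarith
    then have "partition_of_frob n a b ! (i - 1) = a ! (i - 1) + i"
      using i by (simp add: partition_of_frob_def nth_append del: upt_Suc)
    then show ?thesis using 1 i n by (simp add: part_def length_partition_of_frob)
  next
    case 2
    then have "\<not> i - 1 < n" "i - 1 - n < b ! 0 + 1 - n" using i by arith+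
    then have "partition_of_frob n a b ! (i - 1) = leg_count n b i"
      using 2 i n by (simp add: partition_of_frob_def nth_append del: upt_Suc)
    then show ?thesis using 2 i by (simp add: part_def length_partition_of_frob)
  next
    case 3
    then have "\<not> 1 \<le> leg_count n b i" using le_leg_count_iff[of 1 i] by simp
    then show ?thesis using 3 n by (simp add: part_def length_partition_of_frob)
  qed
qed

lemma le_part_partition_of_frob_iff:
  assumes i: "1 \<le> i" and j: "1 \<le> j"
  shows "j \<le> part (partition_of_frob n a b) i \<longleftrightarrow> frob_cell n a b i j"
proof (cases "i \<le> n")
  case True
  then show ?thesis
    using i leg_lower[OF j] by (auto simp: part_partition_of_frob frob_cell_def)
next
  case False
  then show ?thesis using i le_leg_count_iff[OF j] by (auto simp: part_partition_of_frob frob_cell_def)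
qed

lemma part_partition_of_frob_antimono:
  assumes i: "1 \<le> i" "i \<le> i'"
  shows "part (partition_of_frob n a b) i' \<le> part (partition_of_frob n a b) i"
proof -
  have "leg_count n b i' \<le> leg_count n b i"
    unfolding leg_count_def using i by (intro card_mono) auto
  then show ?thesis
    using i arm_antimono[OF i] leg_count_le[of i'] arm_lower[OF i(1)]
    by (auto simp: part_partition_of_frob)
qed

lemma is_partition_partition_of_frob: "is_partition (partition_of_frob n a b)"
  unfolding is_partition_def
proof
  show "sorted_wrt (\<ge>) (partition_of_frob n a b)"
    unfolding sorted_wrt_iff_nth_less
    using part_partition_of_frob_antimono by (auto simp: nth_eq_part)
  show "0 \<notin> set (partition_of_frob n a b)"
  proof
    assume "0 \<in> set (partition_of_frob n a b)"
    then obtain p where p: "p < b ! 0 + 1" "part (partition_of_frob n a b) (Suc p) = 0"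
      by (auto simp: in_set_conv_nth length_partition_of_frob nth_eq_part)
    then show False
      using le_leg_count_iff[of 1 "Suc p"] rank_pos by (simp add: part_partition_of_frob split: if_splits)
  qed
qed

lemma frob_rank_partition_of_frob: "frob_rank (partition_of_frob n a b) = n"
proof (rule nat_eq_if_same_pos_lower_bounds)
  fix i :: nat assume i: "1 \<le> i"
  then show "i \<le> frob_rank (partition_of_frob n a b) \<longleftrightarrow> i \<le> n"
    using le_frob_rank_iff[OF is_partition_partition_of_frob i] le_part_partition_of_frob_iff[OF i i]
    by (auto simp: frob_cell_def)
qed

lemma frob_alpha_partition_of_frob: "frob_alpha (partition_of_frob n a b) = a"
proof (rule nth_equalityI)
  fix p assume "p < length (frob_alpha (partition_of_frob n a b))"
  then have p: "1 \<le> Suc p" "Suc p \<le> n" by (simp_all add: frob_rank_partition_of_frob)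
  have "part (partition_of_frob n a b) (Suc p) = a ! p + Suc p"
  proof (rule nat_eq_if_same_pos_lower_bounds)
    fix j :: nat assume j: "1 \<le> j"
    show "j \<le> part (partition_of_frob n a b) (Suc p) \<longleftrightarrow> j \<le> a ! p + Suc p"
      using le_part_partition_of_frob_iff[OF p(1) j] leg_lower[OF j] p
      by (auto simp: frob_cell_def)
  qed
  then show "frob_alpha (partition_of_frob n a b) ! p = a ! p"
    using nth_frob_alpha[OF p(1)] p by (simp add: frob_rank_partition_of_frob)
qed (simp add: frob_rank_partition_of_frob length_a)

lemma frob_beta_partition_of_frob: "frob_beta (partition_of_frob n a b) = b"
proof (rule nth_equalityI)
  fix p assume "p < length (frob_beta (partition_of_frob n a b))"
  then have p: "1 \<le> Suc p" "Suc p \<le> n" by (simp_all add: frob_rank_partition_of_frob)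
  have "conj_part (partition_of_frob n a b) (Suc p) = b ! p + Suc p"
  proof (rule nat_eq_if_same_pos_lower_bounds)
    fix i :: nat assume i: "1 \<le> i"
    show "i \<le> conj_part (partition_of_frob n a b) (Suc p) \<longleftrightarrow> i \<le> b ! p + Suc p"
      using le_part_iff_le_conj_part[OF is_partition_partition_of_frob i p(1)]
        le_part_partition_of_frob_iff[OF i p(1)] arm_lower[OF i] p
      by (auto simp: frob_cell_def)
  qed
  then show "frob_beta (partition_of_frob n a b) ! p = b ! p"
    using nth_frob_beta[OF p(1)] p by (simp add: frob_rank_partition_of_frob)
qed (simp add: frob_rank_partition_of_frob length_b)

lemma partition_of_frob_unique:
  assumes mu: "is_partition mu"
    and coords: "frob_rank mu = n" "frob_alpha mu = a" "frob_beta mu = b"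
  shows "partition_of_frob n a b = mu"
  by (rule partition_eqI[OF is_partition_partition_of_frob mu])
    (simp add: le_part_partition_of_frob_iff le_part_iff_frob_cell[OF mu] coords)

lemma sum_list_leg_counts:
  "sum_list (map (leg_count n b) [n + 1..<b ! 0 + 2]) + n * n = sum_list b + (\<Sum>j<n. Suc j)"
proof -
  define I where "I = {n + 1..<b ! 0 + 2}"
  have column: "card {i \<in> I. i \<le> b ! (j - 1) + j} = b ! (j - 1) + j - n" if j: "j \<in> {1..n}" for j
  proof -
    have "b ! (j - 1) + j \<le> b ! 0 + 1" using leg_antimono[of 1 j] j by simp
    then have "{i \<in> I. i \<le> b ! (j - 1) + j} = {n + 1..<b ! (j - 1) + j + 1}"
      by (auto simp: I_def)
    then show ?thesis by simp
  qed
  have "sum_list (map (leg_count n b) [n + 1..<b ! 0 + 2]) = (\<Sum>i\<in>I. card {j \<in> {1..n}. i \<le> b ! (j - 1) + j})"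
    by (simp add: I_def leg_count_def sum_set_upt_conv_sum_list_nat[symmetric])
  also have "\<dots> = (\<Sum>i\<in>I. \<Sum>j\<in>{1..n}. if i \<le> b ! (j - 1) + j then 1 else 0)"
    by (intro sum.cong refl card_filter_eq_sum) simp
  also have "\<dots> = (\<Sum>j\<in>{1..n}. \<Sum>i\<in>I. if i \<le> b ! (j - 1) + j then 1 else 0)"
    by (rule sum.swap)
  also have "\<dots> = (\<Sum>j\<in>{1..n}. card {i \<in> I. i \<le> b ! (j - 1) + j})"
    by (intro sum.cong refl card_filter_eq_sum[symmetric]) (simp add: I_def)
  also have "\<dots> = (\<Sum>j\<in>{1..n}. b ! (j - 1) + j - n)"
    using column by simp
  finally have "sum_list (map (leg_count n b) [n + 1..<b ! 0 + 2]) + n * n =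
      (\<Sum>j\<in>{1..n}. (b ! (j - 1) + j - n) + n)"
    by (simp add: sum.distrib)
  also have "\<dots> = (\<Sum>j\<in>{1..n}. b ! (j - 1) + j)"
    using leg_lower by (intro sum.cong) auto
  also have "\<dots> = sum_list b + (\<Sum>j<n. Suc j)"
    using length_b by (simp add: sum.atLeast1_atMost_eq sum.distrib sum_list_sum_nth lessThan_atLeast0)
  finally show ?thesis .
qed

lemma psize_partition_of_frob: "psize (partition_of_frob n a b) = n + sum_list a + sum_list b"
proof -
  have "sum_list (map (\<lambda>i. a ! (i - 1) + i) [1..<n + 1]) = (\<Sum>i\<in>{1..n}. a ! (i - 1) + i)"
    by (simp add: sum_set_upt_conv_sum_list_nat[symmetric] atLeastLessThanSuc_atLeastAtMost del: upt_Suc)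
  also have "\<dots> = sum_list a + (\<Sum>j<n. Suc j)"
    using length_a by (simp add: sum.atLeast1_atMost_eq sum.distrib sum_list_sum_nth lessThan_atLeast0)
  finally have "psize (partition_of_frob n a b) + n * n = sum_list a + sum_list b + 2 * (\<Sum>j<n. Suc j)"
    using sum_list_leg_counts by (simp add: psize_def partition_of_frob_def del: upt_Suc)
  moreover have "2 * (\<Sum>j<n. Suc j) = n * n + n"
    by (induction n) (simp_all add: algebra_simps)
  ultimately show ?thesis by linarith
qed

end

section \<open>Asymmetric partitions\<close>

definition asym_beta :: "nat \<Rightarrow> nat \<Rightarrow> nat \<Rightarrow> nat list \<Rightarrow> nat list" where
  "asym_beta z1 z2 k al = map (\<lambda>x. x + z1) (take (k - 1) al @ drop k al) @ [z2]"

lemma asymmetric_iff: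
  "asymmetric z1 z2 k mu \<longleftrightarrow>
     is_partition mu \<and> 1 \<le> k \<and> k \<le> frob_rank mu \<and> sorted_wrt (>) (frob_alpha mu) \<and>
     frob_beta mu = asym_beta z1 z2 k (frob_alpha mu)"
  by (simp add: asymmetric_def asym_beta_def)

lemma length_asym_beta: "1 \<le> k \<Longrightarrow> k \<le> length al \<Longrightarrow> length (asym_beta z1 z2 k al) = length al"
  by (simp add: asym_beta_def)

lemma sorted_asym_beta:
  assumes al: "sorted_wrt (>) al" and z: "z2 < z1"
  shows "sorted_wrt (>) (asym_beta z1 z2 k al)"
proof -
  have "sorted_wrt (>) (take (k - 1) al @ drop k al)"
  proof -
    have "x > y" if x: "x \<in> set (take (k - 1) al)" and y: "y \<in> set (drop k al)" for x y
    proof -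
      obtain p where p: "p < length (take (k - 1) al)" "take (k - 1) al ! p = x"
        using x unfolding in_set_conv_nth by blast
      obtain q where q: "q < length (drop k al)" "drop k al ! q = y"
        using y unfolding in_set_conv_nth by blast
      have "x = al ! p" "y = al ! (k + q)" "p < k + q" "k + q < length al" using p q by auto
      then show ?thesis using al by (simp add: sorted_wrt_iff_nth_less)
    qed
    then show ?thesis using al by (simp add: sorted_wrt_append sorted_wrt_take sorted_wrt_drop)
  qed
  then show ?thesis
    using z by (auto simp: asym_beta_def sorted_wrt_append sorted_wrt_map)
qed

lemma sum_list_asym_beta:
  assumes "1 \<le> k" "k \<le> length al"
  shows "sum_list (asym_beta z1 z2 k al) + al ! (k - 1) = sum_list al + (length al - 1) * z1 + z2"
proof -
  have "al = take (k - 1) al @ al ! (k - 1) # drop k al"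
    using id_take_nth_drop[of "k - 1" al] assms by simp
  then have "sum_list al = sum_list (take (k - 1) al) + al ! (k - 1) + sum_list (drop k al)"
    by (metis add.assoc sum_list.Cons sum_list_append)
  moreover have "(k - 1) + (length al - k) = length al - 1" using assms by simp
  then have "(k - 1) * z1 + (length al - k) * z1 = (length al - 1) * z1"
    by (metis add_mult_distrib)
  moreover have "min (length al) (k - 1) = k - 1" using assms by simp
  ultimately show ?thesis
    by (simp add: asym_beta_def sum_list_addf sum_list_triv)
qed

context
  fixes z1 z2 k n :: nat
  assumes z: "z2 < z1" and k: "1 \<le> k" "k \<le> n"
begin

lemma frob_coords_asym_beta:
  "length al = n \<Longrightarrow> sorted_wrt (>) al \<Longrightarrow> frob_coords n al (asym_beta z1 z2 k al)"
  using z k by unfold_locales (simp_all add: length_asym_beta sorted_asym_beta)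

lemma bij_asym_partition:
  "bij_betw (\<lambda>al. partition_of_frob n al (asym_beta z1 z2 k al))
     {al. length al = n \<and> sorted_wrt (>) al} {mu. asymmetric z1 z2 k mu \<and> frob_rank mu = n}"
proof (rule bij_betw_byWitness[where f'=frob_alpha])
  let ?A = "{al. length al = n \<and> sorted_wrt (>) al}"
  note coords = frob_coords_asym_beta
  show "\<forall>al\<in>?A. frob_alpha (partition_of_frob n al (asym_beta z1 z2 k al)) = al"
    using frob_coords.frob_alpha_partition_of_frob[OF coords] by simp
  show "\<forall>mu\<in>{mu. asymmetric z1 z2 k mu \<and> frob_rank mu = n}.
      partition_of_frob n (frob_alpha mu) (asym_beta z1 z2 k (frob_alpha mu)) = mu"
    using frob_coords.partition_of_frob_unique[OF coords] by (simp add: asymmetric_iff)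
  show "(\<lambda>al. partition_of_frob n al (asym_beta z1 z2 k al)) ` ?A
      \<subseteq> {mu. asymmetric z1 z2 k mu \<and> frob_rank mu = n}"
    using k frob_coords.is_partition_partition_of_frob[OF coords]
      frob_coords.frob_rank_partition_of_frob[OF coords]
      frob_coords.frob_alpha_partition_of_frob[OF coords]
      frob_coords.frob_beta_partition_of_frob[OF coords]
    by (auto simp: asymmetric_iff)
  show "frob_alpha ` {mu. asymmetric z1 z2 k mu \<and> frob_rank mu = n} \<subseteq> ?A"
    by (auto simp: asymmetric_iff)
qed

lemma psize_asym_partition_of_gaps:
  assumes d: "length d = n"
  shows "psize (partition_of_frob n (strict_of_gaps d) (asym_beta z1 z2 k (strict_of_gaps d))) =
           z2 + z1 * (n - 1) + n * (n - 1) + k + weighted_sum (asym_weights k n) d"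
proof -
  let ?al = "strict_of_gaps d"
  have al: "length ?al = n" "sorted_wrt (>) ?al" using d sorted_strict_of_gaps by auto
  have "psize (partition_of_frob n ?al (asym_beta z1 z2 k ?al)) + ?al ! (k - 1) =
      n + 2 * sum_list ?al + (n - 1) * z1 + z2"
    using frob_coords.psize_partition_of_frob[OF frob_coords_asym_beta[OF al]]
      sum_list_asym_beta[of k ?al z1 z2] al(1) k by simp
  then show ?thesis
    using weighted_sum_asym_weights[OF d k] mult.commute[of z1 "n - 1"] by linarith
qed

lemma rhs_term_denominator:
  "(\<Prod>j\<in>{1..<k}. 1 - fps_X ^ (2 * j)) * (\<Prod>j\<in>{k..n}. 1 - fps_X ^ (2 * j - 1)) =
     (prod_list (map (\<lambda>x. 1 - fps_X ^ x) (asym_weights k n)) :: 'a :: comm_ring_1 fps)"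
proof -
  let ?g = "\<lambda>j. (1 - fps_X ^ (if j < k then 2 * j else 2 * j - 1) :: 'a fps)"
  have "prod_list (map (\<lambda>x. 1 - fps_X ^ x) (asym_weights k n)) = prod ?g {1..<n + 1}"
    by (simp add: asym_weights_def comp_def prod.distinct_set_conv_list[symmetric] del: upt_Suc)
  also have "{1..<n + 1} = {1..<k} \<union> {k..n}" using k by auto
  also have "prod ?g ({1..<k} \<union> {k..n}) = prod ?g {1..<k} * prod ?g {k..n}"
    by (rule prod.union_disjoint) auto
  also have "prod ?g {1..<k} = (\<Prod>j\<in>{1..<k}. 1 - fps_X ^ (2 * j))"
    by (rule prod.cong) auto
  also have "prod ?g {k..n} = (\<Prod>j\<in>{k..n}. 1 - fps_X ^ (2 * j - 1))"
    by (rule prod.cong) auto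
  finally show ?thesis by simp
qed

lemma rhs_term_exponent:
  "nat (int z2 + int z1 * (int n - 1) + int n + int n * (int n - 2) + int k) =
     z2 + z1 * (n - 1) + n * (n - 1) + k"
proof -
  obtain n' where n: "n = Suc n'" using k by (cases n) auto
  have "int z2 + int z1 * (int n - 1) + int n + int n * (int n - 2) + int k =
      int (z2 + z1 * (n - 1) + n * (n - 1) + k)"
    unfolding n by (simp add: algebra_simps)
  then show ?thesis by (metis nat_int)
qed

lemma rhs_term_eq_gf_rank:
  "rhs_term z1 z2 k n =
     Abs_fps (\<lambda>m. of_nat (card {mu \<in> {mu. asymmetric z1 z2 k mu \<and> frob_rank mu = n}. psize mu = m}))"
  unfolding rhs_term_def rhs_term_exponent rhs_term_denominator
proof (rule gf_affine_parametrisation[symmetric])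
  show "bij_betw (\<lambda>d. partition_of_frob n (strict_of_gaps d) (asym_beta z1 z2 k (strict_of_gaps d)))
      {d. length d = length (asym_weights k n)} {mu. asymmetric z1 z2 k mu \<and> frob_rank mu = n}"
    using bij_betw_trans[OF bij_strict_of_gaps bij_asym_partition] by (simp add: comp_def)
  show "psize (partition_of_frob n (strict_of_gaps d) (asym_beta z1 z2 k (strict_of_gaps d))) =
      z2 + z1 * (n - 1) + n * (n - 1) + k + weighted_sum (asym_weights k n) d"
    if "length d = length (asym_weights k n)" for d
    using that psize_asym_partition_of_gaps by simp
qed (rule zero_notin_asym_weights)

end

lemma asym_gf_nth:
  "fps_nth (asym_gf z1 z2 k) m =
     of_nat (\<Sum>i\<le>m. card {mu. asymmetric z1 z2 k mu \<and> frob_rank mu = k + i \<and> psize mu = m})"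
proof -
  let ?B = "\<lambda>i. {mu. asymmetric z1 z2 k mu \<and> frob_rank mu = k + i \<and> psize mu = m}"
  have "{mu \<in> asym_set z1 z2 k. psize mu = m} = (\<Union>i\<le>m. ?B i)"
  proof (intro equalityI subsetI)
    fix mu assume mu: "mu \<in> {mu \<in> asym_set z1 z2 k. psize mu = m}"
    then have "k \<le> frob_rank mu" "frob_rank mu \<le> m"
      using frob_rank_le_psize by (auto simp: asym_set_def asymmetric_def)
    then show "mu \<in> (\<Union>i\<le>m. ?B i)"
      using mu by (auto simp: asym_set_def intro!: bexI[of _ "frob_rank mu - k"])
  qed (auto simp: asym_set_def)
  moreover have "card (\<Union>i\<le>m. ?B i) = (\<Sum>i\<le>m. card (?B i))"
  proof (rule card_UN_disjoint)
    show "\<forall>i\<in>{..m}. finite (?B i)"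
      by (intro ballI finite_subset[OF _ finite_partitions_of_size[of m]]) (auto simp: asymmetric_def)
  qed auto
  ultimately show ?thesis
    by (simp add: asym_gf_def)
qed

theorem corollary6p2:
  fixes z1 z2 k :: nat
  assumes "z2 < z1" and "1 \<le> k"
  shows "(\<lambda>i. rhs_term z1 z2 k (k + i)) sums asym_gf z1 z2 k"
proof -
  let ?c = "\<lambda>n m. card {mu. asymmetric z1 z2 k mu \<and> frob_rank mu = n \<and> psize mu = m}"
  have rhs: "fps_nth (rhs_term z1 z2 k (k + i)) m = of_nat (?c (k + i) m)" for i m
    using rhs_term_eq_gf_rank[OF assms, of "k + i"] by simp
  have "?c n m = 0" if "m < n" for n m
  proof -
    have "{mu. asymmetric z1 z2 k mu \<and> frob_rank mu = n \<and> psize mu = m} = {}"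
      using that by (auto simp: asymmetric_def dest: frob_rank_le_psize)
    then show ?thesis by (metis card.empty)
  qed
  then have "(\<lambda>i. rhs_term z1 z2 k (k + i)) sums
      Abs_fps (\<lambda>m. \<Sum>i\<le>m. fps_nth (rhs_term z1 z2 k (k + i)) m)"
    by (intro sums_fps_finite_support_coeffs) (simp add: rhs)
  also have "Abs_fps (\<lambda>m. \<Sum>i\<le>m. fps_nth (rhs_term z1 z2 k (k + i)) m) = asym_gf z1 z2 k"
    by (intro fps_ext) (simp add: rhs asym_gf_nth)
  finally show ?thesis .
qed

end
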